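(* Let $F$ be a non-archimedean local field of characteristic not $2$ with valuation ring $\mathfrak{o}$, $V$ a $2$-dimensional $F$-vector space, and $\ddagger$ an orthogonal involution on $End(V)$ with associated bilinear form $b_\ddagger$. For a lattice $\Lambda\subset V$, the order $End(\Lambda)\cap End(\Lambda^\sharp)$ depends only on $\Lambda$ up to scaling by $F^\times$, so that $$[\Lambda]\mapsto End(\Lambda)\cap End(\Lambda^\sharp)$$ is a well-defined map from lattices in $V$ up to scaling to orders of $End(V)$; its image is exactly the set of orders of the form $\mathcal{O}\cap\mathcal{O}^\ddagger$ with $\mathcal{O}$ a maximal order of $End(V)$.
   Context: $b_\ddagger$ is a nondegenerate symmetric bilinear form on $V$ (unique up to $F^\times$-scaling) with $b_\ddagger(v,\sigma w)=b_\ddagger(\sigma^\ddagger v,w)$ for all $v,w\in V,\sigma\in End(V)$. A lattice in $V$ is a finitely generated $\mathfrak{o}$-submodule spanning $V$. $\Lambda^\sharp=\{v\in V: b_\ddagger(v,\Lambda)\subset\mathfrak{o}\}$ and $End(\Lambda)=\{\sigma\in End(V):\sigma(\Lambda)\subset\Lambda\}$. An order is an $\mathfrak{o}$-lattice in $End(V)$ which is a subring with $1$ spanning $End(V)$; $\mathcal{O}^\ddagger=\{x^\ddagger : x\in\mathcal{O}\}$. *)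

theory Defs
  imports "HOL-Analysis.Analysis"
begin

(* A discrete (normalized, surjective onto Z) valuation on a field; v 0 is irrelevant. *)
definition discrete_valuation :: "('a::field \<Rightarrow> int) \<Rightarrow> bool" where
  "discrete_valuation v \<longleftrightarrow>
     (\<forall>x y. x \<noteq> 0 \<longrightarrow> y \<noteq> 0 \<longrightarrow> v (x * y) = v x + v y) \<and>
     (\<forall>x y. x \<noteq> 0 \<longrightarrow> y \<noteq> 0 \<longrightarrow> x + y \<noteq> 0 \<longrightarrow> v (x + y) \<ge> min (v x) (v y)) \<and>
     (\<forall>n. \<exists>x. x \<noteq> 0 \<and> v x = n)"

definition val_ring :: "('a::field \<Rightarrow> int) \<Rightarrow> 'a set" where
  "val_ring v = {x. x = 0 \<or> v x \<ge> 0}"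

definition val_ideal :: "('a::field \<Rightarrow> int) \<Rightarrow> 'a set" where
  "val_ideal v = {x. x = 0 \<or> v x \<ge> 1}"

definition val_complete :: "('a::field \<Rightarrow> int) \<Rightarrow> bool" where
  "val_complete v \<longleftrightarrow>
     (\<forall>X :: nat \<Rightarrow> 'a.
        (\<forall>N::int. \<exists>M. \<forall>m\<ge>M. \<forall>n\<ge>M. X m - X n = 0 \<or> v (X m - X n) \<ge> N) \<longrightarrow>
        (\<exists>L. \<forall>N::int. \<exists>M. \<forall>n\<ge>M. X n - L = 0 \<or> v (X n - L) \<ge> N))"

(* residue field o/p is finite: finitely many cosets of p in o *)
definition finite_residue_field :: "('a::field \<Rightarrow> int) \<Rightarrow> bool" where
  "finite_residue_field v \<longleftrightarrow>
     (\<exists>S. finite S \<and> S \<subseteq> val_ring v \<and> (\<forall>x\<in>val_ring v. \<exists>s\<in>S. x - s \<in> val_ideal v))"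

definition nonarch_local_field :: "('a::field \<Rightarrow> int) \<Rightarrow> bool" where
  "nonarch_local_field v \<longleftrightarrow> discrete_valuation v \<and> val_complete v \<and> finite_residue_field v"

definition o_lattice :: "('a::field \<Rightarrow> int) \<Rightarrow> ('a \<Rightarrow> 'v::ab_group_add \<Rightarrow> 'v) \<Rightarrow> 'v set \<Rightarrow> bool" where
  "o_lattice v sm L \<longleftrightarrow>
     (\<exists>S. finite S \<and> L = {(\<Sum>s\<in>S. sm (c s) s) | c. \<forall>s\<in>S. c s \<in> val_ring v}) \<and>
     (\<forall>x. \<exists>S c. finite S \<and> S \<subseteq> L \<and> x = (\<Sum>s\<in>S. sm (c s) s))"

(* V = F^2, End(V) = 2x2 matrices over F *)
definition mat_smult :: "'a::times \<Rightarrow> 'a^2^2 \<Rightarrow> 'a^2^2" where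
  "mat_smult c A = (\<chi> i j. c * A $ i $ j)"

definition lattice :: "('a::field \<Rightarrow> int) \<Rightarrow> ('a^2) set \<Rightarrow> bool" where
  "lattice v L \<longleftrightarrow> o_lattice v (*s) L"

definition dual_lattice :: "('a::field \<Rightarrow> int) \<Rightarrow> ('a^2 \<Rightarrow> 'a^2 \<Rightarrow> 'a) \<Rightarrow> ('a^2) set \<Rightarrow> ('a^2) set" where
  "dual_lattice v b L = {x. \<forall>y\<in>L. b x y \<in> val_ring v}"

definition End_lat :: "('a::field^2) set \<Rightarrow> ('a^2^2) set" where
  "End_lat L = {\<sigma>. \<forall>x\<in>L. \<sigma> *v x \<in> L}"

definition is_order :: "('a::field \<Rightarrow> int) \<Rightarrow> ('a^2^2) set \<Rightarrow> bool" where
  "is_order v R \<longleftrightarrow> o_lattice v mat_smult R \<and> mat 1 \<in> R \<and> (\<forall>x\<in>R. \<forall>y\<in>R. x ** y \<in> R)"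

definition maximal_order :: "('a::field \<Rightarrow> int) \<Rightarrow> ('a^2^2) set \<Rightarrow> bool" where
  "maximal_order v R \<longleftrightarrow> is_order v R \<and> (\<forall>R'. is_order v R' \<longrightarrow> R \<subseteq> R' \<longrightarrow> R' = R)"

definition sym_nondeg_bilinear :: "('a::field^2 \<Rightarrow> 'a^2 \<Rightarrow> 'a) \<Rightarrow> bool" where
  "sym_nondeg_bilinear b \<longleftrightarrow>
     (\<forall>x y z. b (x + y) z = b x z + b y z) \<and>
     (\<forall>c x y. b (c *s x) y = c * b x y) \<and>
     (\<forall>x y. b x y = b y x) \<and>
     (\<forall>x. (\<forall>y. b x y = 0) \<longrightarrow> x = 0)"

(* involution of the first kind on End(V): F-linear anti-automorphism of order 2 *)
definition involution :: "('a::field^2^2 \<Rightarrow> 'a^2^2) \<Rightarrow> bool" where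
  "involution \<iota> \<longleftrightarrow>
     (\<forall>A B. \<iota> (A + B) = \<iota> A + \<iota> B) \<and>
     (\<forall>c A. \<iota> (mat_smult c A) = mat_smult c (\<iota> A)) \<and>
     (\<forall>A B. \<iota> (A ** B) = \<iota> B ** \<iota> A) \<and>
     (\<forall>A. \<iota> (\<iota> A) = A)"

(* b is the bilinear form associated with \<iota>: b(v, \<sigma> w) = b(\<iota> \<sigma> v, w); b symmetric means \<iota> is orthogonal *)
definition adjoint_form :: "('a::field^2^2 \<Rightarrow> 'a^2^2) \<Rightarrow> ('a^2 \<Rightarrow> 'a^2 \<Rightarrow> 'a) \<Rightarrow> bool" where
  "adjoint_form \<iota> b \<longleftrightarrow> (\<forall>x w \<sigma>. b x (\<sigma> *v w) = b (\<iota> \<sigma> *v x) w)"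

end

(*
  Since the valuation ring o is a discrete valuation ring, every lattice L in F^2 has a basis, its
  dual L# is the lattice of the dual basis and L## = L. The adjoint of an endomorphism of L
  stabilises L#, so the involution maps End(L) onto End(L#) and End(L) \<inter> End(L#) is O \<inter> O\<ddagger> for
  O = End(L). Scaling L by c scales L# by 1/c and changes neither ring. Intersections of such rings
  are orders because they are bounded o-submodules of End(V) containing a neighbourhood of 0, and
  bounded o-submodules are finitely generated. Finally the maximal orders are exactly the End(L):
  End(L) is maximal since the matrix units of a basis of L cut each matrix coefficient of an element
  of a larger order out as a scalar of that order, which must be integral; and every order stabilises
  the lattice spanned by the columns of its generators.
*)

theory Submission
  imports Defs
begin

section \<open>Discrete valuations\<close>

lemma ex_min_int_bdd_below:
  fixes f :: "'b \<Rightarrow> int"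
  assumes "x0 \<in> X" and "\<And>x. x \<in> X \<Longrightarrow> f x \<ge> B"
  obtains x where "x \<in> X" and "\<And>y. y \<in> X \<Longrightarrow> f x \<le> f y"
proof -
  obtain x where x: "x \<in> X" and least: "\<And>y. y \<in> X \<Longrightarrow> nat (f x - B) \<le> nat (f y - B)"
    using ex_has_least_nat[of "\<lambda>y. y \<in> X" x0 "\<lambda>y. nat (f y - B)"] assms(1) by blast
  have "f x \<le> f y" if "y \<in> X" for y
    using least[OF that] assms(2)[OF x] assms(2)[OF that] by linarith
  with x that show thesis by blast
qed

text \<open>\<open>ideal_pow v n\<close> is the fractional ideal \<open>p\<^sup>n\<close> of the valuation ring \<open>o = ideal_pow v 0\<close>.\<close>

definition ideal_pow :: "('a::field \<Rightarrow> int) \<Rightarrow> int \<Rightarrow> 'a set" where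
  "ideal_pow v n = {x. x = 0 \<or> v x \<ge> n}"

lemma val_ring_eq_ideal_pow: "val_ring v = ideal_pow v 0"
  unfolding val_ring_def ideal_pow_def by auto

locale discrete_valued_field =
  fixes v :: "'a::field \<Rightarrow> int"
  assumes discrete_valuation: "discrete_valuation v"
begin

lemma v_mult: "x \<noteq> 0 \<Longrightarrow> y \<noteq> 0 \<Longrightarrow> v (x * y) = v x + v y"
  using discrete_valuation unfolding discrete_valuation_def by blast

lemma v_add: "x \<noteq> 0 \<Longrightarrow> y \<noteq> 0 \<Longrightarrow> x + y \<noteq> 0 \<Longrightarrow> v (x + y) \<ge> min (v x) (v y)"
  using discrete_valuation unfolding discrete_valuation_def by blast

lemma v_surj: "\<exists>t. t \<noteq> 0 \<and> v t = n"
  using discrete_valuation unfolding discrete_valuation_def by blast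

lemma v_one: "v 1 = 0"
  using v_mult[of 1 1] by simp

lemma v_inverse: "x \<noteq> 0 \<Longrightarrow> v (inverse x) = - v x"
  using v_mult[of x "inverse x"] v_one by simp

lemma v_uminus: "v (- x) = v x"
proof (cases "x = 0")
  case False
  have "v (-1) = 0" using v_mult[of "-1" "-1"] v_one by simp
  then show ?thesis using v_mult[of "-1" x] False by simp
qed simp

lemma v_power: "x \<noteq> 0 \<Longrightarrow> v (x ^ n) = int n * v x"
  by (induction n) (auto simp: v_one v_mult algebra_simps)

lemma zero_in_ideal_pow [simp]: "0 \<in> ideal_pow v n"
  by (simp add: ideal_pow_def)

lemma one_in_ideal_pow: "1 \<in> ideal_pow v 0"
  by (simp add: ideal_pow_def v_one)

lemma in_ideal_pow_v: "a \<in> ideal_pow v (v a)"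
  by (simp add: ideal_pow_def)

lemma ideal_pow_mono: "a \<in> ideal_pow v n \<Longrightarrow> m \<le> n \<Longrightarrow> a \<in> ideal_pow v m"
  unfolding ideal_pow_def by auto

lemma ideal_pow_add: "a \<in> ideal_pow v n \<Longrightarrow> b \<in> ideal_pow v n \<Longrightarrow> a + b \<in> ideal_pow v n"
  unfolding ideal_pow_def using v_add[of a b] by fastforce

lemma ideal_pow_uminus: "a \<in> ideal_pow v n \<Longrightarrow> - a \<in> ideal_pow v n"
  unfolding ideal_pow_def by (auto simp: v_uminus)

lemma ideal_pow_mult: "a \<in> ideal_pow v n \<Longrightarrow> b \<in> ideal_pow v m \<Longrightarrow> a * b \<in> ideal_pow v (n + m)"
  unfolding ideal_pow_def by (cases "a = 0 \<or> b = 0") (auto simp: v_mult)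

lemma ideal_pow_mult_integral: "a \<in> ideal_pow v 0 \<Longrightarrow> b \<in> ideal_pow v n \<Longrightarrow> a * b \<in> ideal_pow v n"
  using ideal_pow_mult[of a 0 b n] by simp

lemma ideal_pow_divide: "a \<in> ideal_pow v n \<Longrightarrow> t \<noteq> 0 \<Longrightarrow> a / t \<in> ideal_pow v (n - v t)"
  using ideal_pow_mult[of a n "inverse t" "- v t"]
  by (simp add: divide_inverse ideal_pow_def v_inverse)

lemma ideal_pow_divide_integral:
  assumes "t \<noteq> 0" and "a = 0 \<or> v t \<le> v a"
  shows "a / t \<in> ideal_pow v 0"
proof -
  have "a \<in> ideal_pow v (v t)" using assms(2) by (auto simp: ideal_pow_def)
  then show ?thesis using ideal_pow_divide[OF _ assms(1)] by fastforce
qed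

lemma ideal_pow_sum: "(\<And>s. s \<in> S \<Longrightarrow> f s \<in> ideal_pow v n) \<Longrightarrow> sum f S \<in> ideal_pow v n"
  by (induction S rule: infinite_finite_induct) (auto intro: ideal_pow_add)

lemma finite_family_in_ideal_pow: "finite I \<Longrightarrow> \<exists>B. \<forall>i\<in>I. f i \<in> ideal_pow v B"
proof (induction I rule: finite_induct)
  case (insert x F)
  then obtain B where "\<forall>i\<in>F. f i \<in> ideal_pow v B" by auto
  then show ?case
    using in_ideal_pow_v[of "f x"] by (intro exI[of _ "min B (v (f x))"]) (auto intro: ideal_pow_mono)
qed simp

lemma powers_not_in_ideal_pow:
  assumes "c \<notin> ideal_pow v 0"
  shows "\<exists>n. c ^ n \<notin> ideal_pow v N"
proof -
  have c: "c \<noteq> 0" "v c \<le> -1" using assms by (auto simp: ideal_pow_def)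
  define k where "k = nat (\<bar>N\<bar> + 1)"
  have "int k * v c \<le> int k * (-1)" using c(2) by (intro mult_left_mono) auto
  then have "v (c ^ k) < N" using v_power[OF c(1), of k] by (simp add: k_def)
  then show ?thesis using c(1) by (intro exI[of _ k]) (simp add: ideal_pow_def)
qed

lemma ex_least_valuation:
  assumes "x0 \<in> X" and "f x0 \<noteq> 0" and "\<And>x. x \<in> X \<Longrightarrow> f x \<in> ideal_pow v B"
  obtains e where "e \<in> X" and "f e \<noteq> 0" and "\<And>y. y \<in> X \<Longrightarrow> f y / f e \<in> ideal_pow v 0"
proof -
  have "x0 \<in> {x\<in>X. f x \<noteq> 0}" using assms(1,2) by blast
  moreover have "\<And>x. x \<in> {x\<in>X. f x \<noteq> 0} \<Longrightarrow> v (f x) \<ge> B"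
    using assms(3) by (auto simp: ideal_pow_def)
  ultimately obtain e where "e \<in> {x\<in>X. f x \<noteq> 0}"
    and "\<And>y. y \<in> {x\<in>X. f x \<noteq> 0} \<Longrightarrow> v (f e) \<le> v (f y)"
    by (rule ex_min_int_bdd_below) auto
  moreover have "f y / f e \<in> ideal_pow v 0" if "y \<in> X" for y
    using calculation that by (intro ideal_pow_divide_integral) auto
  ultimately show thesis using that by blast
qed

end


section \<open>Modules over the valuation ring\<close>

text \<open>Lets vectors and matrices be treated uniformly.\<close>

definition coordinates :: "('a::field \<Rightarrow> 'v::ab_group_add \<Rightarrow> 'v) \<Rightarrow> ('v \<Rightarrow> 'i::finite \<Rightarrow> 'a) \<Rightarrow> bool" where
  "coordinates sm co \<longleftrightarrow>
     (\<forall>x y i. co (x + y) i = co x i + co y i) \<and> (\<forall>c x i. co (sm c x) i = c * co x i) \<and> inj co"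

definition o_submodule :: "('a::field \<Rightarrow> int) \<Rightarrow> ('a \<Rightarrow> 'v::ab_group_add \<Rightarrow> 'v) \<Rightarrow> 'v set \<Rightarrow> bool" where
  "o_submodule v sm N \<longleftrightarrow>
     0 \<in> N \<and> (\<forall>x\<in>N. \<forall>y\<in>N. x + y \<in> N) \<and> (\<forall>c\<in>ideal_pow v 0. \<forall>x\<in>N. sm c x \<in> N)"

definition o_span :: "('a::field \<Rightarrow> int) \<Rightarrow> ('a \<Rightarrow> 'v::ab_group_add \<Rightarrow> 'v) \<Rightarrow> 'v set \<Rightarrow> 'v set" where
  "o_span v sm S = {(\<Sum>s\<in>S. sm (c s) s) | c. \<forall>s\<in>S. c s \<in> val_ring v}"

definition coord_box :: "('a::field \<Rightarrow> int) \<Rightarrow> ('v \<Rightarrow> 'i \<Rightarrow> 'a) \<Rightarrow> int \<Rightarrow> 'v set" where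
  "coord_box v co n = {x. \<forall>i. co x i \<in> ideal_pow v n}"

lemma o_spanI: "x = (\<Sum>s\<in>S. sm (c s) s) \<Longrightarrow> (\<And>s. s \<in> S \<Longrightarrow> c s \<in> val_ring v) \<Longrightarrow> x \<in> o_span v sm S"
  unfolding o_span_def by blast

lemma o_span_if_o_lattice: "o_lattice v sm L \<Longrightarrow> \<exists>S. finite S \<and> L = o_span v sm S"
  unfolding o_lattice_def o_span_def by blast

lemma o_submodule_sum:
  assumes "o_submodule v sm N" and "\<And>t. t \<in> T \<Longrightarrow> f t \<in> N"
  shows "sum f T \<in> N"
  using assms(2)
  by (induction T rule: infinite_finite_induct) (use assms(1) in \<open>auto simp: o_submodule_def\<close>)

lemma o_submodule_Int: "o_submodule v sm M \<Longrightarrow> o_submodule v sm N \<Longrightarrow> o_submodule v sm (M \<inter> N)"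
  unfolding o_submodule_def by blast

context discrete_valued_field
begin

context
  fixes sm :: "'a \<Rightarrow> 'v::ab_group_add \<Rightarrow> 'v" and co :: "'v \<Rightarrow> 'i::finite \<Rightarrow> 'a"
  assumes coordinates: "coordinates sm co"
begin

lemma co_add: "co (x + y) i = co x i + co y i"
  using coordinates unfolding coordinates_def by blast

lemma co_smult: "co (sm c x) i = c * co x i"
  using coordinates unfolding coordinates_def by blast

lemma co_eqI: "(\<And>i. co x i = co y i) \<Longrightarrow> x = y"
  using coordinates unfolding coordinates_def by (meson ext injD)

lemma co_zero: "co 0 i = 0"
proof -
  have "co 0 i + 0 = co 0 i + co 0 i" using co_add[of 0 0 i] by simp
  then show ?thesis by (rule add_left_cancel[THEN iffD1, symmetric])
qed

lemma co_sum: "co (sum f S) i = (\<Sum>s\<in>S. co (f s) i)"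
  by (induction S rule: infinite_finite_induct) (auto simp: co_zero co_add)

lemma smult_zero: "sm 0 x = 0"
  by (rule co_eqI) (simp add: co_smult co_zero)

lemma smult_one: "sm 1 x = x"
  by (rule co_eqI) (simp add: co_smult)

lemma smult_smult: "sm a (sm c x) = sm (a * c) x"
  by (rule co_eqI) (simp add: co_smult)

lemma o_span_superset: "finite S \<Longrightarrow> S \<subseteq> o_span v sm S"
proof
  fix s assume S: "finite S" and s: "s \<in> S"
  let ?c = "\<lambda>t. if t = s then (1::'a) else 0"
  have "(\<Sum>t\<in>S. sm (?c t) t) = sm 1 s + (\<Sum>t\<in>S - {s}. sm (?c t) t)"
    using S s by (simp add: sum.remove)
  also have "(\<Sum>t\<in>S - {s}. sm (?c t) t) = 0"
    by (intro sum.neutral) (auto simp: smult_zero)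
  finally show "s \<in> o_span v sm S"
    by (intro o_spanI[where c = ?c]) (auto simp: smult_one val_ring_def v_one)
qed

lemma o_submodule_o_span: "o_submodule v sm (o_span v sm S)"
  unfolding o_submodule_def
proof (intro conjI ballI)
  show "0 \<in> o_span v sm S"
    by (rule o_spanI[where c = "\<lambda>_. 0"]) (auto simp: smult_zero val_ring_def)
next
  fix x y assume "x \<in> o_span v sm S" "y \<in> o_span v sm S"
  then obtain c d where x: "x = (\<Sum>s\<in>S. sm (c s) s)" "\<forall>s\<in>S. c s \<in> val_ring v"
    and y: "y = (\<Sum>s\<in>S. sm (d s) s)" "\<forall>s\<in>S. d s \<in> val_ring v"
    unfolding o_span_def by blast
  have "x + y = (\<Sum>s\<in>S. sm (c s + d s) s)"
    by (rule co_eqI) (simp add: x y co_add co_sum co_smult algebra_simps sum.distrib)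
  then show "x + y \<in> o_span v sm S"
    by (rule o_spanI) (use x y in \<open>auto simp: val_ring_eq_ideal_pow intro: ideal_pow_add\<close>)
next
  fix a x assume a: "a \<in> ideal_pow v 0" and "x \<in> o_span v sm S"
  then obtain c where x: "x = (\<Sum>s\<in>S. sm (c s) s)" "\<forall>s\<in>S. c s \<in> val_ring v"
    unfolding o_span_def by blast
  have "sm a x = (\<Sum>s\<in>S. sm (a * c s) s)"
    by (rule co_eqI) (simp add: x co_sum co_smult sum_distrib_left algebra_simps)
  then show "sm a x \<in> o_span v sm S"
    by (rule o_spanI) (use x a in \<open>auto simp: val_ring_eq_ideal_pow intro: ideal_pow_mult_integral\<close>)
qed

lemma o_span_least: "o_submodule v sm N \<Longrightarrow> S \<subseteq> N \<Longrightarrow> o_span v sm S \<subseteq> N"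
  unfolding o_span_def o_submodule_def val_ring_eq_ideal_pow
  by (auto intro!: o_submodule_sum[of v sm N] simp: o_submodule_def)

lemma o_span_bounded: "finite S \<Longrightarrow> \<exists>B. o_span v sm S \<subseteq> coord_box v co B"
proof -
  assume S: "finite S"
  obtain B where B: "\<forall>p\<in>S \<times> UNIV. co (fst p) (snd p) \<in> ideal_pow v B"
    using finite_family_in_ideal_pow[of "S \<times> (UNIV::'i set)" "\<lambda>p. co (fst p) (snd p)"] S by auto
  have "co x i \<in> ideal_pow v B" if x_span: "x \<in> o_span v sm S" for x i
  proof -
    obtain c where x: "x = (\<Sum>s\<in>S. sm (c s) s)" "\<forall>s\<in>S. c s \<in> val_ring v"
      using x_span unfolding o_span_def by blast
    have "co x i = (\<Sum>s\<in>S. c s * co s i)" by (simp add: x co_sum co_smult)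
    also have "\<dots> \<in> ideal_pow v B"
      using x(2) B by (intro ideal_pow_sum ideal_pow_mult_integral) (auto simp: val_ring_eq_ideal_pow)
    finally show ?thesis .
  qed
  then show ?thesis unfolding coord_box_def by blast
qed

text \<open>Induction on the set \<open>J\<close>
  of coordinates allowed to be nonzero; an element with the least valuation in a new coordinate \<open>j\<close>
  generates the submodule modulo the kernel of coordinate \<open>j\<close>.\<close>

lemma finitely_generated_if_supported:
  assumes "finite J" and "o_submodule v sm N" and "N \<subseteq> coord_box v co B"
    and "\<And>x i. x \<in> N \<Longrightarrow> i \<notin> J \<Longrightarrow> co x i = 0"
  shows "\<exists>S. finite S \<and> S \<subseteq> N \<and> N = o_span v sm S"
  using assms
proof (induction J arbitrary: N rule: finite_induct)
  case empty
  have "x = 0" if "x \<in> N" for x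
    using empty.prems(3)[OF that] by (intro co_eqI) (simp add: co_zero)
  then have "N = {0}" using empty.prems(1) by (auto simp: o_submodule_def)
  moreover have "o_span v sm {} = {0}" unfolding o_span_def by simp
  ultimately show ?case by (intro exI[of _ "{}"]) simp
next
  case (insert j J)
  define N' where "N' = {x\<in>N. co x j = 0}"
  have N'_submodule: "o_submodule v sm N'"
    using insert.prems(1) unfolding N'_def o_submodule_def by (auto simp: co_zero co_add co_smult)
  have N'_bounded: "N' \<subseteq> coord_box v co B" using insert.prems(2) unfolding N'_def by blast
  have N'_supported: "co x i = 0" if "x \<in> N'" "i \<notin> J" for x i
    using insert.prems(3) that by (cases "i = j") (auto simp: N'_def)
  obtain S' where S': "finite S'" "S' \<subseteq> N'" "N' = o_span v sm S'"
    using insert.IH[OF N'_submodule N'_bounded N'_supported] by blast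
  show ?case
  proof (cases "\<exists>x\<in>N. co x j \<noteq> 0")
    case False
    then have "N = N'" unfolding N'_def by auto
    then show ?thesis using S' by blast
  next
    case True
    then obtain x0 where "x0 \<in> N" "co x0 j \<noteq> 0" by blast
    moreover have "\<And>x. x \<in> N \<Longrightarrow> co x j \<in> ideal_pow v B"
      using insert.prems(2) by (auto simp: coord_box_def)
    ultimately obtain e where e: "e \<in> N" "co e j \<noteq> 0"
      and e_divides: "\<And>y. y \<in> N \<Longrightarrow> co y j / co e j \<in> ideal_pow v 0"
      by (rule ex_least_valuation) auto
    have eS': "e \<notin> S'" using e S'(2) unfolding N'_def by auto
    have "N \<subseteq> o_span v sm (insert e S')"
    proof
      fix x assume x: "x \<in> N"
      define a where "a = co x j / co e j"
      have a: "a \<in> ideal_pow v 0"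
        unfolding a_def using e_divides[OF x] .
      have "sm (-a) e \<in> N"
        using insert.prems(1) e a ideal_pow_uminus unfolding o_submodule_def by blast
      then have "x + sm (-a) e \<in> N'"
        using insert.prems(1) x e(2) unfolding N'_def o_submodule_def a_def
        by (simp add: co_add co_smult)
      then obtain c where c: "x + sm (-a) e = (\<Sum>s\<in>S'. sm (c s) s)" "\<forall>s\<in>S'. c s \<in> val_ring v"
        using S'(3) unfolding o_span_def by blast
      have "(\<Sum>s\<in>S'. sm ((c(e := a)) s) s) = (\<Sum>s\<in>S'. sm (c s) s)"
        using eS' by (intro sum.cong) auto
      then have "(\<Sum>s\<in>insert e S'. sm ((c(e := a)) s) s) = sm a e + (\<Sum>s\<in>S'. sm (c s) s)"
        using S'(1) eS' by simp
      also have "\<dots> = x" unfolding c(1)[symmetric] by (rule co_eqI) (simp add: co_add co_smult)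
      finally show "x \<in> o_span v sm (insert e S')"
        by (intro o_spanI[where c = "c(e := a)"]) (use c(2) a in \<open>auto simp: val_ring_eq_ideal_pow\<close>)
    qed
    moreover have "insert e S' \<subseteq> N" using S'(2) e(1) unfolding N'_def by auto
    ultimately have "N = o_span v sm (insert e S')"
      using o_span_least[OF insert.prems(1)] by blast
    then show ?thesis using S'(1) \<open>insert e S' \<subseteq> N\<close> by blast
  qed
qed

lemma finitely_generated_if_bounded:
  "o_submodule v sm N \<Longrightarrow> N \<subseteq> coord_box v co B \<Longrightarrow> \<exists>S. finite S \<and> S \<subseteq> N \<and> N = o_span v sm S"
  using finitely_generated_if_supported[OF finite_class.finite_UNIV, of N B] by blast

lemma o_lattice_if_between_coord_boxes:
  assumes N: "o_submodule v sm N" and bounded: "N \<subseteq> coord_box v co B" and box: "coord_box v co K \<subseteq> N"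
  shows "o_lattice v sm N"
proof -
  have "\<exists>S c. finite S \<and> S \<subseteq> N \<and> x = (\<Sum>s\<in>S. sm (c s) s)" for x
  proof -
    obtain B' where B': "\<forall>i\<in>UNIV. co x i \<in> ideal_pow v B'"
      using finite_family_in_ideal_pow[of UNIV "co x"] by auto
    obtain t where t: "t \<noteq> 0" "v t = K - B'" using v_surj by blast
    then have t_ideal: "t \<in> ideal_pow v (K - B')" by (simp add: ideal_pow_def)
    have "co (sm t x) i \<in> ideal_pow v K" for i
      using ideal_pow_mult[OF t_ideal, of "co x i" B'] B' by (simp add: co_smult)
    then have "sm t x \<in> N" using box by (auto simp: coord_box_def)
    moreover have "x = sm (inverse t) (sm t x)" using t(1) by (simp add: smult_smult smult_one)
    ultimately show ?thesis by (intro exI[of _ "{sm t x}"] exI[of _ "\<lambda>_. inverse t"]) auto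
  qed
  moreover obtain S where "finite S" "N = o_span v sm S"
    using finitely_generated_if_bounded[OF N bounded] by blast
  ultimately show ?thesis unfolding o_lattice_def o_span_def by blast
qed

end

end

lemma coordinates_vec: "coordinates ((*s) :: 'a::field \<Rightarrow> 'a^'n \<Rightarrow> 'a^'n) vec_nth"
  unfolding coordinates_def by (simp add: inj_on_def vec_eq_iff)

definition mat_entry :: "'a^'n^'m \<Rightarrow> 'm \<times> 'n \<Rightarrow> 'a" where
  "mat_entry A p = A $ fst p $ snd p"

lemma coordinates_mat: "coordinates (mat_smult :: 'a::field \<Rightarrow> 'a^2^2 \<Rightarrow> 'a^2^2) mat_entry"
  unfolding coordinates_def mat_entry_def
  by (auto simp: inj_on_def vec_eq_iff mat_smult_def fun_eq_iff)

lemma o_submodule_smult_closed: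
  "o_submodule v sm N \<Longrightarrow> c \<in> ideal_pow v 0 \<Longrightarrow> x \<in> N \<Longrightarrow> sm c x \<in> N"
  unfolding o_submodule_def by blast

lemma o_submodule_add_closed: "o_submodule v sm N \<Longrightarrow> x \<in> N \<Longrightarrow> y \<in> N \<Longrightarrow> x + y \<in> N"
  unfolding o_submodule_def by blast

context discrete_valued_field
begin

lemma o_submodule_if_o_lattice: "o_lattice v sm L \<Longrightarrow> coordinates sm co \<Longrightarrow> o_submodule v sm L"
  using o_span_if_o_lattice o_submodule_o_span by metis

lemma o_lattice_subset_coord_box: "o_lattice v sm L \<Longrightarrow> coordinates sm co \<Longrightarrow> \<exists>B. L \<subseteq> coord_box v co B"
  using o_span_if_o_lattice o_span_bounded by metis

lemma o_lattice_smult_in: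
  fixes L :: "('a^'n) set"
  assumes L: "o_lattice v (*s) L"
  shows "\<exists>m. \<forall>a\<in>ideal_pow v m. a *s y \<in> L"
proof -
  obtain S c where S: "finite S" "S \<subseteq> L" "y = (\<Sum>s\<in>S. c s *s s)"
    using L unfolding o_lattice_def by blast
  obtain B where B: "\<forall>s\<in>S. c s \<in> ideal_pow v B" using finite_family_in_ideal_pow[OF S(1)] by blast
  have "a *s y \<in> L" if a: "a \<in> ideal_pow v (-B)" for a
  proof -
    have "a *s y = (\<Sum>s\<in>S. (a * c s) *s s)"
      unfolding S(3) by (simp add: vec_eq_iff sum_distrib_left mult.assoc)
    also have "\<dots> \<in> L"
    proof (rule o_submodule_sum[OF o_submodule_if_o_lattice[OF L coordinates_vec]])
      fix s assume s: "s \<in> S"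
      have "a * c s \<in> ideal_pow v 0" using ideal_pow_mult[OF a] B s by fastforce
      then show "(a * c s) *s s \<in> L"
        using o_submodule_smult_closed[OF o_submodule_if_o_lattice[OF L coordinates_vec]] S(2) s by blast
    qed
    finally show ?thesis .
  qed
  then show ?thesis by blast
qed

lemma coord_box_subset_o_lattice:
  fixes L :: "('a^'n) set"
  assumes L: "o_lattice v (*s) L"
  shows "\<exists>K. coord_box v vec_nth K \<subseteq> L"
proof -
  have "\<forall>i. \<exists>m. \<forall>a\<in>ideal_pow v m. a *s axis i 1 \<in> L"
    using o_lattice_smult_in[OF L] by blast
  then obtain m where m: "\<And>i a. a \<in> ideal_pow v (m i) \<Longrightarrow> a *s axis i 1 \<in> L"
    by (metis choice)
  define K where "K = Max (range m)"
  have "x \<in> L" if x: "x \<in> coord_box v vec_nth K" for x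
  proof -
    have "x$i *s axis i 1 \<in> L" for i
      using x m ideal_pow_mono[of "x$i" K "m i"] by (simp add: coord_box_def K_def)
    then have "(\<Sum>i\<in>UNIV. x$i *s axis i 1) \<in> L"
      by (rule o_submodule_sum[OF o_submodule_if_o_lattice[OF L coordinates_vec]])
    then show ?thesis by (simp add: basis_expansion)
  qed
  then show ?thesis by blast
qed

end


section \<open>Lattices in \<open>F\<^sup>2\<close> and their duals\<close>

definition vec2 :: "'a \<Rightarrow> 'a \<Rightarrow> 'a^2" where
  "vec2 a c = (\<chi> i. if i = 1 then a else c)"

lemma vec2_nth [simp]: "vec2 a c $ 1 = a" "vec2 a c $ 2 = c"
  by (simp_all add: vec2_def)

definition det2 :: "'a::field^2 \<Rightarrow> 'a^2 \<Rightarrow> 'a" where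
  "det2 e1 e2 = e1$1 * e2$2 - e1$2 * e2$1"

definition dot2 :: "'a::field^2 \<Rightarrow> 'a^2 \<Rightarrow> 'a" where
  "dot2 l x = l$1 * x$1 + l$2 * x$2"

text \<open>The rows of the inverse of the matrix with columns \<open>e1\<close>, \<open>e2\<close>: \<open>dot2 (coord_row1 e1 e2) x\<close> and
  \<open>dot2 (coord_row2 e1 e2) x\<close> are the coordinates of \<open>x\<close> in the basis \<open>e1\<close>, \<open>e2\<close>.\<close>

definition coord_row1 :: "'a::field^2 \<Rightarrow> 'a^2 \<Rightarrow> 'a^2" where
  "coord_row1 e1 e2 = vec2 (e2$2 / det2 e1 e2) (- e2$1 / det2 e1 e2)"

definition coord_row2 :: "'a::field^2 \<Rightarrow> 'a^2 \<Rightarrow> 'a^2" where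
  "coord_row2 e1 e2 = vec2 (- e1$2 / det2 e1 e2) (e1$1 / det2 e1 e2)"

lemma dot2_add: "dot2 l (x + y) = dot2 l x + dot2 l y"
  by (simp add: dot2_def algebra_simps)

lemma dot2_smult: "dot2 l (c *s x) = c * dot2 l x"
  by (simp add: dot2_def algebra_simps)

lemma dot2_coord_row1: "dot2 (coord_row1 e1 e2) x = (e2$2 * x$1 - e2$1 * x$2) / det2 e1 e2"
  by (simp add: dot2_def coord_row1_def diff_divide_distrib)

lemma dot2_coord_row2: "dot2 (coord_row2 e1 e2) x = (e1$1 * x$2 - e1$2 * x$1) / det2 e1 e2"
  by (simp add: dot2_def coord_row2_def diff_divide_distrib algebra_simps)

lemma basis_expansion2:
  assumes "det2 e1 e2 \<noteq> 0"
  shows "x = dot2 (coord_row1 e1 e2) x *s e1 + dot2 (coord_row2 e1 e2) x *s e2"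
proof -
  have "(e2$2 * x$1 - e2$1 * x$2) * e1$i + (e1$1 * x$2 - e1$2 * x$1) * e2$i = det2 e1 e2 * x$i" for i
    using exhaust_2[of i] by (auto simp: det2_def algebra_simps)
  then have "(e2$2 * x$1 - e2$1 * x$2) / det2 e1 e2 * e1$i + (e1$1 * x$2 - e1$2 * x$1) / det2 e1 e2 * e2$i
      = x$i" for i
    using assms by (simp add: add_divide_distrib[symmetric])
  then show ?thesis by (simp add: vec_eq_iff dot2_coord_row1 dot2_coord_row2)
qed

lemma coord_rows_combination:
  assumes "det2 e1 e2 \<noteq> 0"
  shows "dot2 (coord_row1 e1 e2) (a *s e1 + c *s e2) = a"
    and "dot2 (coord_row2 e1 e2) (a *s e1 + c *s e2) = c"
proof -
  have "e2$2 * (a * e1$1 + c * e2$1) - e2$1 * (a * e1$2 + c * e2$2) = a * det2 e1 e2"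
    "e1$1 * (a * e1$2 + c * e2$2) - e1$2 * (a * e1$1 + c * e2$1) = c * det2 e1 e2"
    by (simp_all add: det2_def algebra_simps)
  then show "dot2 (coord_row1 e1 e2) (a *s e1 + c *s e2) = a"
    and "dot2 (coord_row2 e1 e2) (a *s e1 + c *s e2) = c"
    using assms by (simp_all add: dot2_coord_row1 dot2_coord_row2)
qed


lemma dot2_commute: "dot2 l x = dot2 x l"
  by (simp add: dot2_def mult.commute)

lemma det2_vec2: "det2 (vec2 a b) (vec2 c d) = a * d - b * c"
  by (simp add: det2_def)

lemma det2_coord_rows:
  assumes "det2 e1 e2 \<noteq> 0"
  shows "det2 (coord_row1 e1 e2) (coord_row2 e1 e2) = 1 / det2 e1 e2"
proof -
  have "det2 (coord_row1 e1 e2) (coord_row2 e1 e2)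
      = (e1$1 * e2$2 - e1$2 * e2$1) / (det2 e1 e2 * det2 e1 e2)"
    unfolding coord_row1_def coord_row2_def
    by (simp add: det2_vec2 times_divide_times_eq diff_divide_distrib mult.commute)
  then show ?thesis using assms by (simp add: det2_def)
qed

lemma det2_eq_0_kernel:
  assumes "det2 u w = 0"
  shows "\<exists>x. x \<noteq> 0 \<and> dot2 u x = 0 \<and> dot2 w x = 0"
proof -
  consider "u \<noteq> 0" | "u = 0" "w \<noteq> 0" | "u = 0" "w = 0" by blast
  then show ?thesis
  proof cases
    case 1
    then have "vec2 (u$2) (- u$1) \<noteq> 0" by (auto simp: vec_eq_iff forall_2)
    then show ?thesis
      using assms by (intro exI[of _ "vec2 (u$2) (- u$1)"]) (auto simp: dot2_def det2_def algebra_simps)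
  next
    case 2
    then have "vec2 (w$2) (- w$1) \<noteq> 0" by (auto simp: vec_eq_iff forall_2)
    then show ?thesis using 2
      by (intro exI[of _ "vec2 (w$2) (- w$1)"]) (auto simp: dot2_def algebra_simps)
  next
    case 3
    have "vec2 1 0 \<noteq> (0 :: 'a^2)" by (metis vec2_nth(1) zero_index zero_neq_one)
    then show ?thesis using 3 by (intro exI[of _ "vec2 1 0"]) (simp add: dot2_def)
  qed
qed

context
  fixes b :: "'a::field^2 \<Rightarrow> 'a^2 \<Rightarrow> 'a"
  assumes bilinear: "sym_nondeg_bilinear b"
begin

lemma b_add_left: "b (x + y) z = b x z + b y z"
  using bilinear unfolding sym_nondeg_bilinear_def by blast

lemma b_smult_left: "b (c *s x) y = c * b x y"
  using bilinear unfolding sym_nondeg_bilinear_def by blast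

lemma b_commute: "b x y = b y x"
  using bilinear unfolding sym_nondeg_bilinear_def by blast

lemma b_nondegenerate: "(\<And>y. b x y = 0) \<Longrightarrow> x = 0"
  using bilinear unfolding sym_nondeg_bilinear_def by blast

lemma b_add_right: "b z (x + y) = b z x + b z y"
  using b_add_left b_commute by metis

lemma b_smult_right: "b y (c *s x) = c * b y x"
  using b_smult_left b_commute by metis

lemma b_eq_dot2: "b x y = dot2 (vec2 (b (axis 1 1) y) (b (axis 2 1) y)) x"
proof -
  have "x = x$1 *s axis 1 1 + x$2 *s axis 2 1"
    using basis_expansion[of x] by (simp add: UNIV_2)
  then have "b x y = b (x$1 *s axis 1 1 + x$2 *s axis 2 1) y" by simp
  then show ?thesis by (simp add: b_add_left b_smult_left dot2_def mult.commute)
qed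

lemma b_eq_if_eq_on_basis:
  assumes "det2 e1 e2 \<noteq> 0" and "b x e1 = b z e1" and "b x e2 = b z e2"
  shows "x = z"
proof -
  have "b (x - z) y = 0" for y
  proof -
    have "b (x - z) y = b (x - z) (dot2 (coord_row1 e1 e2) y *s e1 + dot2 (coord_row2 e1 e2) y *s e2)"
      by (rule arg_cong[where f = "b (x - z)"], rule basis_expansion2[OF assms(1)])
    moreover have "b (x - z) w = b x w - b z w" for w
      using b_add_left[of "x - z" z w] by simp
    ultimately show ?thesis using assms(2,3) by (simp add: b_add_right b_smult_right)
  qed
  then show ?thesis using b_nondegenerate[of "x - z"] by simp
qed

text \<open>With \<open>b x e\<^sub>i = dot2 u\<^sub>i x\<close>, the dual basis consists of the coordinate rows for \<open>u\<^sub>1, u\<^sub>2\<close>, which are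
  independent by nondegeneracy.\<close>

lemma dual_basis_exists:
  assumes "det2 e1 e2 \<noteq> 0"
  obtains f1 f2 where "det2 f1 f2 \<noteq> 0"
    and "b f1 e1 = 1" and "b f1 e2 = 0" and "b f2 e1 = 0" and "b f2 e2 = 1"
proof -
  define u where "u = vec2 (b (axis 1 1) e1) (b (axis 2 1) e1)"
  define w where "w = vec2 (b (axis 1 1) e2) (b (axis 2 1) e2)"
  have b_e: "b x e1 = dot2 x u" "b x e2 = dot2 x w" for x
    unfolding u_def w_def by (subst b_eq_dot2, rule dot2_commute)+
  have uw: "det2 u w \<noteq> 0"
  proof
    assume "det2 u w = 0"
    then obtain x where "x \<noteq> 0" "dot2 u x = 0" "dot2 w x = 0" using det2_eq_0_kernel by blast
    moreover have "x = 0"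
      using calculation(2,3) by (intro b_eq_if_eq_on_basis[OF assms]) (simp_all add: b_e dot2_commute dot2_def)
    ultimately show False by blast
  qed
  have "dot2 (coord_row1 u w) u = 1" "dot2 (coord_row1 u w) w = 0"
    "dot2 (coord_row2 u w) u = 0" "dot2 (coord_row2 u w) w = 1"
    using coord_rows_combination[OF uw, of 1 0] coord_rows_combination[OF uw, of 0 1] by simp_all
  moreover have "det2 (coord_row1 u w) (coord_row2 u w) \<noteq> 0" using det2_coord_rows[OF uw] uw by simp
  ultimately show thesis by (intro that) (simp_all add: b_e)
qed

end


definition basis_lattice :: "('a::field \<Rightarrow> int) \<Rightarrow> 'a^2 \<Rightarrow> 'a^2 \<Rightarrow> ('a^2) set" where
  "basis_lattice v e1 e2 = {a *s e1 + c *s e2 | a c. a \<in> ideal_pow v 0 \<and> c \<in> ideal_pow v 0}"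

context discrete_valued_field
begin

lemma basis_lattice_iff:
  assumes "det2 e1 e2 \<noteq> 0"
  shows "x \<in> basis_lattice v e1 e2 \<longleftrightarrow>
    dot2 (coord_row1 e1 e2) x \<in> ideal_pow v 0 \<and> dot2 (coord_row2 e1 e2) x \<in> ideal_pow v 0"
proof
  show "x \<in> basis_lattice v e1 e2 \<Longrightarrow>
      dot2 (coord_row1 e1 e2) x \<in> ideal_pow v 0 \<and> dot2 (coord_row2 e1 e2) x \<in> ideal_pow v 0"
    using coord_rows_combination[OF assms] by (auto simp: basis_lattice_def)
  show "dot2 (coord_row1 e1 e2) x \<in> ideal_pow v 0 \<and> dot2 (coord_row2 e1 e2) x \<in> ideal_pow v 0 \<Longrightarrow>
      x \<in> basis_lattice v e1 e2"
    using basis_expansion2[OF assms, of x] unfolding basis_lattice_def by blast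
qed

lemma basis_in_basis_lattice: "e1 \<in> basis_lattice v e1 e2" "e2 \<in> basis_lattice v e1 e2"
proof -
  have "e1 = 1 *s e1 + 0 *s e2" "e2 = 0 *s e1 + 1 *s e2" by simp_all
  then show "e1 \<in> basis_lattice v e1 e2" "e2 \<in> basis_lattice v e1 e2"
    unfolding basis_lattice_def using one_in_ideal_pow zero_in_ideal_pow by blast+
qed

lemma lattice_basis_lattice:
  assumes det: "det2 e1 e2 \<noteq> 0"
  shows "lattice v (basis_lattice v e1 e2)"
proof -
  have ne: "e1 \<noteq> e2" using det by (auto simp: det2_def)
  have "basis_lattice v e1 e2 = o_span v (*s) {e1, e2}"
  proof (intro equalityI subsetI)
    fix x assume "x \<in> basis_lattice v e1 e2"
    then obtain a c where x: "x = a *s e1 + c *s e2" "a \<in> ideal_pow v 0" "c \<in> ideal_pow v 0"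
      unfolding basis_lattice_def by blast
    then show "x \<in> o_span v (*s) {e1, e2}"
      using ne by (intro o_spanI[where c = "\<lambda>s. if s = e1 then a else c"]) (auto simp: val_ring_eq_ideal_pow)
  next
    fix x assume "x \<in> o_span v (*s) {e1, e2}"
    then obtain c where "x = c e1 *s e1 + c e2 *s e2" "c e1 \<in> ideal_pow v 0" "c e2 \<in> ideal_pow v 0"
      using ne unfolding o_span_def val_ring_eq_ideal_pow by auto
    then show "x \<in> basis_lattice v e1 e2" unfolding basis_lattice_def by blast
  qed
  moreover have "\<exists>S c. finite S \<and> S \<subseteq> basis_lattice v e1 e2 \<and> x = (\<Sum>s\<in>S. c s *s s)" for x
    using basis_expansion2[OF det, of x] ne basis_in_basis_lattice
    by (intro exI[of _ "{e1, e2}"] exI[of _ "\<lambda>s. if s = e1 then dot2 (coord_row1 e1 e2) x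
        else dot2 (coord_row2 e1 e2) x"]) auto
  ultimately show ?thesis unfolding lattice_def o_lattice_def o_span_def by blast
qed

text \<open>A reduced basis: \<open>e2\<close> minimises the valuation of the second coordinate over \<open>L\<close>, and \<open>e1\<close> the
  valuation of the first coordinate over \<open>L \<inter> F \<times> 0\<close>.\<close>

lemma lattice_has_basis:
  assumes L: "lattice v L"
  obtains e1 e2 where "det2 e1 e2 \<noteq> 0" and "L = basis_lattice v e1 e2"
proof -
  have L': "o_lattice v (*s) L" using L by (simp add: lattice_def)
  have sub: "o_submodule v (*s) L" using o_submodule_if_o_lattice[OF L' coordinates_vec] .
  obtain N where N: "L \<subseteq> coord_box v vec_nth N" using o_lattice_subset_coord_box[OF L' coordinates_vec] by blast
  obtain K where K: "coord_box v vec_nth K \<subseteq> L" using coord_box_subset_o_lattice[OF L'] by blast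
  obtain t where t: "t \<noteq> 0" "v t = K" using v_surj by blast
  have axis_in: "axis i t \<in> L" for i :: 2
  proof -
    have "axis i t \<in> coord_box v vec_nth K" using t by (simp add: coord_box_def axis_def ideal_pow_def)
    then show ?thesis using K by blast
  qed
  have coords_bounded: "x$i \<in> ideal_pow v N" if "x \<in> L" for x i
    using N that by (auto simp: coord_box_def)
  obtain e2 where e2: "e2 \<in> L" "e2$2 \<noteq> 0" and e2_div: "\<And>y. y \<in> L \<Longrightarrow> y$2 / e2$2 \<in> ideal_pow v 0"
    by (rule ex_least_valuation[of "axis 2 t" L "\<lambda>x. x$2" N])
      (use axis_in t coords_bounded in \<open>auto simp: axis_def\<close>)
  obtain e1 where e1: "e1 \<in> {x\<in>L. x$2 = 0}" "e1$1 \<noteq> 0"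
    and e1_div: "\<And>y. y \<in> {x\<in>L. x$2 = 0} \<Longrightarrow> y$1 / e1$1 \<in> ideal_pow v 0"
    by (rule ex_least_valuation[of "axis 1 t" "{x\<in>L. x$2 = 0}" "\<lambda>x. x$1" N])
      (use axis_in t coords_bounded in \<open>auto simp: axis_def\<close>)
  have det: "det2 e1 e2 \<noteq> 0" using e1 e2 by (simp add: det2_def)
  have "L \<subseteq> basis_lattice v e1 e2"
  proof
    fix x assume x: "x \<in> L"
    define c where "c = x$2 / e2$2"
    define y where "y = x + (-c) *s e2"
    have c: "c \<in> ideal_pow v 0" unfolding c_def using e2_div[OF x] .
    have "y \<in> {x\<in>L. x$2 = 0}"
      using o_submodule_add_closed[OF sub x o_submodule_smult_closed[OF sub ideal_pow_uminus[OF c] e2(1)]]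
        e2(2) by (simp add: y_def c_def)
    then have "y$1 / e1$1 \<in> ideal_pow v 0" and "y$2 = 0" using e1_div by auto
    moreover have "x = (y$1 / e1$1) *s e1 + c *s e2"
      using e1 e2 \<open>y$2 = 0\<close> unfolding y_def by (simp add: vec_eq_iff forall_2 field_simps)
    ultimately show "x \<in> basis_lattice v e1 e2" using c unfolding basis_lattice_def by blast
  qed
  moreover have "basis_lattice v e1 e2 \<subseteq> L"
    using e1(1) e2(1) sub by (auto simp: basis_lattice_def o_submodule_def)
  ultimately show thesis using det that by blast
qed


context
  fixes b :: "'a^2 \<Rightarrow> 'a^2 \<Rightarrow> 'a"
  assumes bilinear: "sym_nondeg_bilinear b"
begin

lemma dual_basis_lattice:
  assumes det: "det2 e1 e2 \<noteq> 0"
    and f: "b f1 e1 = 1" "b f1 e2 = 0" "b f2 e1 = 0" "b f2 e2 = 1"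
  shows "dual_lattice v b (basis_lattice v e1 e2) = basis_lattice v f1 f2"
proof (intro equalityI subsetI)
  fix x assume "x \<in> dual_lattice v b (basis_lattice v e1 e2)"
  then have x: "b x e1 \<in> ideal_pow v 0" "b x e2 \<in> ideal_pow v 0"
    using basis_in_basis_lattice unfolding dual_lattice_def val_ring_eq_ideal_pow by auto
  have "x = b x e1 *s f1 + b x e2 *s f2"
    by (rule b_eq_if_eq_on_basis[OF bilinear det])
      (simp_all add: b_add_left[OF bilinear] b_smult_left[OF bilinear] f)
  then show "x \<in> basis_lattice v f1 f2" using x unfolding basis_lattice_def by blast
next
  fix x assume "x \<in> basis_lattice v f1 f2"
  then obtain a c where x: "x = a *s f1 + c *s f2" "a \<in> ideal_pow v 0" "c \<in> ideal_pow v 0"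
    unfolding basis_lattice_def by blast
  have "b x y \<in> ideal_pow v 0" if y_in: "y \<in> basis_lattice v e1 e2" for y
  proof -
    obtain a' c' where y: "y = a' *s e1 + c' *s e2" "a' \<in> ideal_pow v 0" "c' \<in> ideal_pow v 0"
      using y_in unfolding basis_lattice_def by blast
    have "b x y = a * a' + c * c'"
      unfolding x(1) y(1)
      by (simp add: b_add_left[OF bilinear] b_add_right[OF bilinear] b_smult_left[OF bilinear]
          b_smult_right[OF bilinear] f)
    then show ?thesis using x y by (simp add: ideal_pow_add ideal_pow_mult_integral)
  qed
  then show "x \<in> dual_lattice v b (basis_lattice v e1 e2)"
    unfolding dual_lattice_def val_ring_eq_ideal_pow by blast
qed

lemma lattice_dual_bases:
  assumes "lattice v L"
  obtains e1 e2 f1 f2 where "det2 f1 f2 \<noteq> 0" and "L = basis_lattice v e1 e2"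
    and "dual_lattice v b L = basis_lattice v f1 f2"
    and "dual_lattice v b (basis_lattice v f1 f2) = basis_lattice v e1 e2"
proof -
  obtain e1 e2 where e: "det2 e1 e2 \<noteq> 0" "L = basis_lattice v e1 e2"
    using lattice_has_basis[OF assms] by blast
  obtain f1 f2 where f: "det2 f1 f2 \<noteq> 0" "b f1 e1 = 1" "b f1 e2 = 0" "b f2 e1 = 0" "b f2 e2 = 1"
    using dual_basis_exists[OF bilinear e(1)] by blast
  have "b e1 f1 = 1" "b e2 f1 = 0" "b e1 f2 = 0" "b e2 f2 = 1"
    using f(2-5) b_commute[OF bilinear] by metis+
  then show thesis
    using that[OF f(1) e(2)] dual_basis_lattice[OF e(1) f(2-5)] dual_basis_lattice[OF f(1)] e(2) by simp
qed

lemma lattice_dual_lattice: "lattice v L \<Longrightarrow> lattice v (dual_lattice v b L)"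
  by (metis lattice_dual_bases lattice_basis_lattice)

lemma dual_dual_lattice: "lattice v L \<Longrightarrow> dual_lattice v b (dual_lattice v b L) = L"
  by (metis lattice_dual_bases)

end

end


section \<open>Endomorphism rings of lattices\<close>

lemma mat_smult_mult_vec: "mat_smult c A *v x = c *s (A *v x)"
  by (simp add: vec_eq_iff matrix_vector_mult_def mat_smult_def sum_distrib_left mult.assoc)

lemma mat_1_in_End_lat: "mat 1 \<in> End_lat L"
  by (simp add: End_lat_def)

lemma End_lat_mult_closed: "\<sigma> \<in> End_lat L \<Longrightarrow> \<tau> \<in> End_lat L \<Longrightarrow> \<sigma> ** \<tau> \<in> End_lat L"
  by (simp add: End_lat_def matrix_vector_mul_assoc[symmetric])

lemma End_lat_scale:
  assumes "c \<noteq> 0"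
  shows "End_lat ((\<lambda>x. c *s x) ` L) = End_lat L"
proof -
  have "c *s y \<in> (\<lambda>x. c *s x) ` L \<longleftrightarrow> y \<in> L" for y
    using assms by auto
  then have scaled_iff: "\<sigma> *v (c *s x) \<in> (\<lambda>x. c *s x) ` L \<longleftrightarrow> \<sigma> *v x \<in> L" for \<sigma> x
    by (simp add: vector_scalar_commute)
  show ?thesis unfolding End_lat_def by (auto simp: scaled_iff)
qed

lemma dual_lattice_scale:
  assumes bilinear: "sym_nondeg_bilinear b" and c: "c \<noteq> 0"
  shows "dual_lattice v b ((\<lambda>x. c *s x) ` L) = (\<lambda>x. inverse c *s x) ` dual_lattice v b L"
proof -
  have dual_iff: "x \<in> dual_lattice v b ((\<lambda>x. c *s x) ` L) \<longleftrightarrow> c *s x \<in> dual_lattice v b L" for x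
    unfolding dual_lattice_def by (simp add: b_smult_left[OF bilinear] b_smult_right[OF bilinear])
  show ?thesis
  proof (intro equalityI subsetI)
    fix x assume "x \<in> dual_lattice v b ((\<lambda>x. c *s x) ` L)"
    moreover have "x = inverse c *s (c *s x)" using c by (simp add: vector_smult_assoc)
    ultimately show "x \<in> (\<lambda>x. inverse c *s x) ` dual_lattice v b L" using dual_iff by blast
  next
    fix x assume "x \<in> (\<lambda>x. inverse c *s x) ` dual_lattice v b L"
    then obtain y where "y \<in> dual_lattice v b L" "x = inverse c *s y" by blast
    moreover have "c *s (inverse c *s y) = y" using c by (simp add: vector_smult_assoc)
    ultimately show "x \<in> dual_lattice v b ((\<lambda>x. c *s x) ` L)" using dual_iff by simp
  qed
qed

lemma adjoint_in_End_lat_dual: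
  assumes adjoint: "adjoint_form \<iota> b" and \<sigma>: "\<sigma> \<in> End_lat L"
  shows "\<iota> \<sigma> \<in> End_lat (dual_lattice v b L)"
proof -
  have "\<iota> \<sigma> *v x \<in> dual_lattice v b L" if x: "x \<in> dual_lattice v b L" for x
  proof -
    have "b (\<iota> \<sigma> *v x) y = b x (\<sigma> *v y)" for y
      using adjoint unfolding adjoint_form_def by simp
    moreover have "\<sigma> *v y \<in> L" if "y \<in> L" for y using \<sigma> that unfolding End_lat_def by blast
    ultimately show ?thesis using x unfolding dual_lattice_def by simp
  qed
  then show ?thesis unfolding End_lat_def by blast
qed

context discrete_valued_field
begin

lemma End_lat_subset_coord_box:
  assumes "lattice v L"
  shows "\<exists>B. End_lat L \<subseteq> coord_box v mat_entry B"
proof -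
  have L: "o_lattice v (*s) L" using assms by (simp add: lattice_def)
  obtain N where N: "L \<subseteq> coord_box v vec_nth N" using o_lattice_subset_coord_box[OF L coordinates_vec] by blast
  obtain K where K: "coord_box v vec_nth K \<subseteq> L" using coord_box_subset_o_lattice[OF L] by blast
  obtain t where t: "t \<noteq> 0" "v t = K" using v_surj by blast
  have "\<sigma> $ i $ j \<in> ideal_pow v (N - K)" if \<sigma>: "\<sigma> \<in> End_lat L" for \<sigma> i j
  proof -
    have "axis j t \<in> coord_box v vec_nth K" using t by (simp add: coord_box_def axis_def ideal_pow_def)
    then have "\<sigma> *v axis j t \<in> coord_box v vec_nth N" using \<sigma> K N unfolding End_lat_def by blast
    then have "\<sigma> $ i $ j * t \<in> ideal_pow v N"
      using exhaust_2[of j] by (auto simp: coord_box_def matrix_vector_mult_def axis_def sum_2)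
    then show ?thesis using ideal_pow_divide[OF _ t(1)] t by fastforce
  qed
  then show ?thesis by (auto simp: coord_box_def mat_entry_def)
qed

lemma coord_box_subset_End_lat:
  assumes "lattice v L"
  shows "\<exists>K. coord_box v mat_entry K \<subseteq> End_lat L"
proof -
  have L: "o_lattice v (*s) L" using assms by (simp add: lattice_def)
  obtain N where N: "L \<subseteq> coord_box v vec_nth N" using o_lattice_subset_coord_box[OF L coordinates_vec] by blast
  obtain m where m: "coord_box v vec_nth m \<subseteq> L" using coord_box_subset_o_lattice[OF L] by blast
  have "X *v x \<in> L" if X: "X \<in> coord_box v mat_entry (m - N)" and x: "x \<in> L" for X x
  proof -
    have "X$i$k * x$k \<in> ideal_pow v (m - N + N)" for i k
      using X N x by (intro ideal_pow_mult) (auto simp: coord_box_def mat_entry_def)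
    then have "(X *v x) $ i \<in> ideal_pow v m" for i
      by (simp add: matrix_vector_mult_def sum_2 ideal_pow_add)
    then show ?thesis using m by (auto simp: coord_box_def)
  qed
  then show ?thesis unfolding End_lat_def by blast
qed

lemma o_submodule_End_lat: "lattice v L \<Longrightarrow> o_submodule v mat_smult (End_lat L)"
  using o_submodule_if_o_lattice[OF _ coordinates_vec, of L]
  by (auto simp: lattice_def o_submodule_def End_lat_def mat_smult_mult_vec matrix_vector_mult_add_rdistrib)

lemma is_order_End_lat_Int:
  assumes "lattice v L" and "lattice v M"
  shows "is_order v (End_lat L \<inter> End_lat M)"
proof -
  obtain B where "End_lat L \<subseteq> coord_box v mat_entry B" using End_lat_subset_coord_box[OF assms(1)] by blast
  then have bounded: "End_lat L \<inter> End_lat M \<subseteq> coord_box v mat_entry B" by blast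
  obtain K1 K2 where "coord_box v mat_entry K1 \<subseteq> End_lat L" "coord_box v mat_entry K2 \<subseteq> End_lat M"
    using coord_box_subset_End_lat assms by metis
  moreover have "coord_box v mat_entry (max K1 K2) \<subseteq> coord_box v mat_entry K1 \<inter> coord_box v mat_entry K2"
    by (auto simp: coord_box_def intro: ideal_pow_mono[of _ "max K1 K2"])
  ultimately have "coord_box v mat_entry (max K1 K2) \<subseteq> End_lat L \<inter> End_lat M"
    by blast
  moreover have "o_submodule v mat_smult (End_lat L \<inter> End_lat M)"
    using o_submodule_Int o_submodule_End_lat assms by blast
  ultimately have "o_lattice v mat_smult (End_lat L \<inter> End_lat M)"
    using o_lattice_if_between_coord_boxes[OF coordinates_mat] bounded by blast
  then show ?thesis unfolding is_order_def by (simp add: mat_1_in_End_lat End_lat_mult_closed)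
qed

end


definition rank_one :: "'a::field^2 \<Rightarrow> 'a^2 \<Rightarrow> 'a^2^2" where
  "rank_one u l = (\<chi> r c. u$r * l$c)"

lemma rank_one_mult_vec: "rank_one u l *v x = dot2 l x *s u"
  by (simp add: vec_eq_iff rank_one_def matrix_vector_mult_def sum_2 dot2_def algebra_simps)

text \<open>The matrix units of the basis \<open>e1\<close>, \<open>e2\<close> cut out the \<open>(l, w)\<close> matrix coefficient of \<open>\<sigma>\<close> as a scalar.\<close>

lemma rank_one_sandwich:
  assumes "det2 e1 e2 \<noteq> 0"
  shows "rank_one e1 l ** \<sigma> ** rank_one w (coord_row1 e1 e2)
      + rank_one e2 l ** \<sigma> ** rank_one w (coord_row2 e1 e2) = mat_smult (dot2 l (\<sigma> *v w)) (mat 1)"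
proof (rule matrix_eq[THEN iffD2], intro allI)
  fix x
  have "(rank_one e1 l ** \<sigma> ** rank_one w (coord_row1 e1 e2)
      + rank_one e2 l ** \<sigma> ** rank_one w (coord_row2 e1 e2)) *v x
      = dot2 l (\<sigma> *v w) *s (dot2 (coord_row1 e1 e2) x *s e1 + dot2 (coord_row2 e1 e2) x *s e2)"
    by (simp add: matrix_vector_mult_add_rdistrib matrix_vector_mul_assoc[symmetric] rank_one_mult_vec
        vector_scalar_commute dot2_smult vec_eq_iff algebra_simps)
  also have "\<dots> = mat_smult (dot2 l (\<sigma> *v w)) (mat 1) *v x"
    using basis_expansion2[OF assms, of x] by (simp add: mat_smult_mult_vec)
  finally show "(rank_one e1 l ** \<sigma> ** rank_one w (coord_row1 e1 e2)
      + rank_one e2 l ** \<sigma> ** rank_one w (coord_row2 e1 e2)) *v x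
      = mat_smult (dot2 l (\<sigma> *v w)) (mat 1) *v x" .
qed

lemma mat_smult_mat_1_mult:
  "mat_smult a (mat 1) ** mat_smult c (mat 1) = mat_smult (a * c) (mat (1::'a::field) :: 'a^2^2)"
  by (simp add: vec_eq_iff forall_2 matrix_matrix_mult_def mat_smult_def mat_def sum_2)

context discrete_valued_field
begin

text \<open>Otherwise the powers of the scalar would leave every bounded set.\<close>

lemma scalar_in_order_integral:
  assumes R: "is_order v R" and \<tau>: "mat_smult \<tau> (mat 1) \<in> R"
  shows "\<tau> \<in> ideal_pow v 0"
proof (rule ccontr)
  assume "\<tau> \<notin> ideal_pow v 0"
  obtain N where N: "R \<subseteq> coord_box v mat_entry N"
    using R o_lattice_subset_coord_box[OF _ coordinates_mat] unfolding is_order_def by blast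
  obtain n where n: "\<tau> ^ n \<notin> ideal_pow v N" using powers_not_in_ideal_pow[OF \<open>\<tau> \<notin> ideal_pow v 0\<close>] by blast
  have powers_in: "mat_smult (\<tau> ^ k) (mat 1) \<in> R" for k
  proof (induction k)
    case 0
    then show ?case using R by (simp add: is_order_def mat_smult_def vec_eq_iff)
  next
    case (Suc k)
    then have "mat_smult (\<tau> ^ k) (mat 1) ** mat_smult \<tau> (mat 1) \<in> R"
      using R \<tau> unfolding is_order_def by blast
    then show ?case by (simp add: mat_smult_mat_1_mult mult.commute)
  qed
  then have "mat_entry (mat_smult (\<tau> ^ n) (mat 1)) (1, 1) \<in> ideal_pow v N"
    using N by (auto simp: coord_box_def)
  then have "\<tau> ^ n \<in> ideal_pow v N" by (simp add: mat_entry_def mat_smult_def mat_def)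
  with n show False by blast
qed

lemma rank_one_in_End_lat:
  assumes det: "det2 e1 e2 \<noteq> 0" and u: "u \<in> basis_lattice v e1 e2"
    and l: "l \<in> {coord_row1 e1 e2, coord_row2 e1 e2}"
  shows "rank_one u l \<in> End_lat (basis_lattice v e1 e2)"
proof -
  have "dot2 l x *s u \<in> basis_lattice v e1 e2" if "x \<in> basis_lattice v e1 e2" for x
  proof -
    have "dot2 l x \<in> ideal_pow v 0" using l that basis_lattice_iff[OF det] by auto
    then show ?thesis
      using u lattice_basis_lattice[OF det] o_submodule_smult_closed o_submodule_if_o_lattice coordinates_vec
      unfolding lattice_def by blast
  qed
  then show ?thesis unfolding End_lat_def by (simp add: rank_one_mult_vec)
qed

lemma in_End_lat_if_coords_integral:
  assumes det: "det2 e1 e2 \<noteq> 0"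
    and integral: "\<And>l w. l \<in> {coord_row1 e1 e2, coord_row2 e1 e2} \<Longrightarrow> w \<in> {e1, e2} \<Longrightarrow>
      dot2 l (\<sigma> *v w) \<in> ideal_pow v 0"
  shows "\<sigma> \<in> End_lat (basis_lattice v e1 e2)"
proof -
  have "\<sigma> *v x \<in> basis_lattice v e1 e2" if x_in: "x \<in> basis_lattice v e1 e2" for x
  proof -
    obtain a c where x: "x = a *s e1 + c *s e2" "a \<in> ideal_pow v 0" "c \<in> ideal_pow v 0"
      using x_in unfolding basis_lattice_def by blast
    have "dot2 l (\<sigma> *v x) = a * dot2 l (\<sigma> *v e1) + c * dot2 l (\<sigma> *v e2)" for l
      by (simp add: x(1) matrix_vector_right_distrib vector_scalar_commute dot2_add dot2_smult)
    then have "dot2 l (\<sigma> *v x) \<in> ideal_pow v 0" if "l \<in> {coord_row1 e1 e2, coord_row2 e1 e2}" for l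
      using integral[OF that] x(2,3) by (simp add: ideal_pow_add ideal_pow_mult_integral)
    then show ?thesis using basis_lattice_iff[OF det] by blast
  qed
  then show ?thesis unfolding End_lat_def by blast
qed

lemma maximal_order_End_lat:
  assumes L: "lattice v L"
  shows "maximal_order v (End_lat L)"
proof -
  obtain e1 e2 where det: "det2 e1 e2 \<noteq> 0" and L_eq: "L = basis_lattice v e1 e2"
    using lattice_has_basis[OF L] by blast
  have "R = End_lat L" if R: "is_order v R" and sub: "End_lat L \<subseteq> R" for R
  proof -
    have "\<sigma> \<in> End_lat L" if \<sigma>: "\<sigma> \<in> R" for \<sigma>
    proof -
      have "dot2 l (\<sigma> *v w) \<in> ideal_pow v 0"
        if l: "l \<in> {coord_row1 e1 e2, coord_row2 e1 e2}" and w: "w \<in> {e1, e2}" for l w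
      proof (rule scalar_in_order_integral[OF R])
        have rank_one_in: "rank_one u l' \<in> R"
          if "u \<in> {e1, e2, w}" "l' \<in> {l, coord_row1 e1 e2, coord_row2 e1 e2}" for u l'
          using that l w sub rank_one_in_End_lat[OF det] basis_in_basis_lattice L_eq by auto
        have mult: "x ** y \<in> R" if "x \<in> R" "y \<in> R" for x y
          using R that unfolding is_order_def by blast
        have "rank_one e1 l ** \<sigma> ** rank_one w (coord_row1 e1 e2)
            + rank_one e2 l ** \<sigma> ** rank_one w (coord_row2 e1 e2) \<in> R"
          using o_submodule_add_closed[OF o_submodule_if_o_lattice[OF _ coordinates_mat]] R
            mult[OF mult[OF rank_one_in \<sigma>] rank_one_in] unfolding is_order_def by simp
        then show "mat_smult (dot2 l (\<sigma> *v w)) (mat 1) \<in> R" by (simp add: rank_one_sandwich[OF det])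
      qed
      then show ?thesis using in_End_lat_if_coords_integral[OF det] L_eq by blast
    qed
    then show ?thesis using sub by blast
  qed
  moreover have "is_order v (End_lat L)" using is_order_End_lat_Int[OF L L] by simp
  ultimately show ?thesis unfolding maximal_order_def by blast
qed

end


lemma o_submodule_preimage: "o_submodule v (*s) M \<Longrightarrow> o_submodule v (*s) {x. A *v x \<in> M}"
  by (simp add: o_submodule_def matrix_vector_right_distrib vector_scalar_commute)

lemma o_submodule_evaluation: "o_submodule v (*s) M \<Longrightarrow> o_submodule v mat_smult {A. A *v x \<in> M}"
  by (simp add: o_submodule_def matrix_vector_mult_add_rdistrib mat_smult_mult_vec)

context discrete_valued_field
begin

lemma lattice_o_span_containing_axes:
  assumes "finite G" and axes: "\<And>j. axis j 1 \<in> o_span v (*s) G"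
  shows "lattice v (o_span v (*s) G)"
proof -
  have "\<exists>S c. finite S \<and> S \<subseteq> o_span v (*s) G \<and> x = (\<Sum>s\<in>S. c s *s s)" for x :: "'a^2"
  proof -
    let ?a1 = "axis 1 1 :: 'a^2" and ?a2 = "axis 2 1 :: 'a^2"
    have ne: "?a1 \<noteq> ?a2" by (simp add: axis_eq_axis)
    have "x = x$1 *s ?a1 + x$2 *s ?a2" using basis_expansion[of x] by (simp add: UNIV_2)
    then have "x = (\<Sum>s\<in>{?a1, ?a2}. (if s = ?a1 then x$1 else x$2) *s s)" using ne by simp
    then show ?thesis using axes by (intro exI[of _ "{?a1, ?a2}"] exI) auto
  qed
  then show ?thesis using assms(1) unfolding lattice_def o_lattice_def o_span_def by blast
qed

text \<open>The lattice generated by the columns of generators of \<open>R\<close> is stable under \<open>R\<close>.\<close>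

lemma order_stabilizes_lattice:
  assumes R: "is_order v R"
  obtains M where "lattice v M" and "R \<subseteq> End_lat M"
proof -
  obtain S where S: "finite S" "R = o_span v mat_smult S"
    using R o_span_if_o_lattice unfolding is_order_def by blast
  have R_sub: "o_submodule v mat_smult R" using S(2) o_submodule_o_span[OF coordinates_mat] by simp
  have S_R: "S \<subseteq> R" using o_span_superset[OF coordinates_mat S(1)] S(2) by simp
  have mult: "x ** y \<in> R" if "x \<in> R" "y \<in> R" for x y using R that unfolding is_order_def by blast
  define G where "G = (\<lambda>(s, j). s *v axis j 1) ` (S \<times> UNIV)"
  define M where "M = o_span v (*s) G"
  have G_finite: "finite G" unfolding G_def using S(1) by simp
  have G: "finite G" "G \<subseteq> M" unfolding M_def by (rule G_finite, rule o_span_superset[OF coordinates_vec G_finite])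
  have M_sub: "o_submodule v (*s) M" unfolding M_def by (rule o_submodule_o_span[OF coordinates_vec])
  have columns: "r *v axis j 1 \<in> M" if "r \<in> R" for r j
  proof -
    have "S \<subseteq> {A. A *v axis j 1 \<in> M}" using G unfolding G_def by auto
    then have "R \<subseteq> {A. A *v axis j 1 \<in> M}"
      using S(2) o_span_least[OF coordinates_mat o_submodule_evaluation[OF M_sub]] by blast
    then show ?thesis using that by blast
  qed
  have "M \<subseteq> {x. r *v x \<in> M}" if r: "r \<in> R" for r
  proof -
    have "r *v (s *v axis j 1) \<in> M" if "s \<in> S" for s j
      using columns[OF mult[OF r]] S_R that by (auto simp: matrix_vector_mul_assoc)
    then have "G \<subseteq> {x. r *v x \<in> M}" unfolding G_def by auto
    then show ?thesis
      unfolding M_def using o_span_least[OF coordinates_vec o_submodule_preimage] M_sub M_def by blast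
  qed
  then have "R \<subseteq> End_lat M" unfolding End_lat_def by blast
  moreover have "lattice v M"
    unfolding M_def using G(1) columns[of "mat 1"] R
    by (intro lattice_o_span_containing_axes) (auto simp: is_order_def M_def)
  ultimately show thesis using that by blast
qed

lemma maximal_order_eq_End_lat:
  assumes "maximal_order v R"
  obtains M where "lattice v M" and "R = End_lat M"
proof -
  obtain M where M: "lattice v M" "R \<subseteq> End_lat M"
    using order_stabilizes_lattice assms unfolding maximal_order_def by blast
  then have "End_lat M = R"
    using assms is_order_End_lat_Int[OF M(1) M(1)] unfolding maximal_order_def by simp
  then show thesis using that M(1) by blast
qed

lemma involution_image_End_lat:
  assumes bilinear: "sym_nondeg_bilinear b" and adjoint: "adjoint_form \<iota> b"
    and involution: "involution \<iota>" and L: "lattice v L"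
  shows "\<iota> ` End_lat L = End_lat (dual_lattice v b L)"
proof
  show "\<iota> ` End_lat L \<subseteq> End_lat (dual_lattice v b L)" using adjoint_in_End_lat_dual[OF adjoint] by blast
  show "End_lat (dual_lattice v b L) \<subseteq> \<iota> ` End_lat L"
  proof
    fix \<tau> assume "\<tau> \<in> End_lat (dual_lattice v b L)"
    then have "\<iota> \<tau> \<in> End_lat L"
      using adjoint_in_End_lat_dual[OF adjoint] dual_dual_lattice[OF bilinear L] by metis
    moreover have "\<tau> = \<iota> (\<iota> \<tau>)" using involution unfolding involution_def by simp
    ultimately show "\<tau> \<in> \<iota> ` End_lat L" by blast
  qed
qed

end


theorem lemma5p3:
  fixes v :: "'a::field \<Rightarrow> int"
    and \<iota> :: "'a^2^2 \<Rightarrow> 'a^2^2"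
    and b :: "'a^2 \<Rightarrow> 'a^2 \<Rightarrow> 'a"
  assumes "nonarch_local_field v"
    and "(2::'a) \<noteq> 0"
    and "involution \<iota>"
    and "sym_nondeg_bilinear b"
    and "adjoint_form \<iota> b"
  shows "(\<forall>L c. lattice v L \<longrightarrow> c \<noteq> 0 \<longrightarrow>
            End_lat ((\<lambda>x. c *s x) ` L) \<inter> End_lat (dual_lattice v b ((\<lambda>x. c *s x) ` L))
            = End_lat L \<inter> End_lat (dual_lattice v b L))
       \<and> (\<forall>L. lattice v L \<longrightarrow> is_order v (End_lat L \<inter> End_lat (dual_lattice v b L)))
       \<and> {End_lat L \<inter> End_lat (dual_lattice v b L) | L. lattice v L}
           = {R \<inter> \<iota> ` R | R. maximal_order v R}"
proof -
  interpret discrete_valued_field v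
    using assms(1) by unfold_locales (simp add: nonarch_local_field_def)
  have order_eq: "End_lat L \<inter> End_lat (dual_lattice v b L) = End_lat L \<inter> \<iota> ` End_lat L"
    if "lattice v L" for L
    using involution_image_End_lat[OF assms(4,5,3) that] by simp
  have "End_lat ((\<lambda>x. c *s x) ` L) \<inter> End_lat (dual_lattice v b ((\<lambda>x. c *s x) ` L))
      = End_lat L \<inter> End_lat (dual_lattice v b L)" if "c \<noteq> 0" for L c
    using that by (simp add: End_lat_scale dual_lattice_scale[OF assms(4)])
  moreover have "is_order v (End_lat L \<inter> End_lat (dual_lattice v b L))" if "lattice v L" for L
    using is_order_End_lat_Int that lattice_dual_lattice[OF assms(4)] by blast
  moreover have "{End_lat L \<inter> End_lat (dual_lattice v b L) | L. lattice v L}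
      = {R \<inter> \<iota> ` R | R. maximal_order v R}"
    using order_eq maximal_order_End_lat maximal_order_eq_End_lat by (metis (no_types, lifting))
  ultimately show ?thesis by blast
qed

end
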